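(* Let $c,d>0$ with $cd\le1$, $g(x)=xF(c,d;c+d;x)$ for $x\in(0,1)$, and $b\ge a>0$. Then for every $s\ge1$, $$1\le\frac{g\!\left(\frac{s^b}{1+s^b}\right)}{g\!\left(\frac{s^a}{1+s^a}\right)}\le\frac ba.$$
   Context: $F(a,b;c;x)$ is the Gaussian hypergeometric function $\sum_{n\ge0}\frac{(a)_n(b)_n}{(c)_n}\frac{x^n}{n!}$ ($|x|<1$), with $(a)_n=a(a+1)\cdots(a+n-1)$, $(a)_0=1$. (In the claim, $a,b$ denote the exponents, not hypergeometric parameters.) *)

theory Defs
  imports "HOL-Analysis.Analysis"
begin

text \<open>Gaussian hypergeometric function F(a,b;c;x) = sum_n (a)_n (b)_n / (c)_n x^n / n!,
  intended for |x| < 1 (where the series converges for the parameters used).\<close>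
definition hyp2F1 :: "real \<Rightarrow> real \<Rightarrow> real \<Rightarrow> real \<Rightarrow> real" where
  "hyp2F1 a b c x = (\<Sum>n. pochhammer a n * pochhammer b n / pochhammer c n * x ^ n / fact n)"

end

theory Submission
  imports Defs
begin

(* Put G(x) = x F(c,d;c+d;x) = \<Sum> A_n x^(n+1) and sigma(u) = e^u/(1+e^u), so that
   s^e/(1+s^e) = sigma(e ln s).  The claim says that u \<mapsto> G(sigma u) is nondecreasing
   and u \<mapsto> G(sigma u)/u is nonincreasing on (0,\<infinity>).
   1. G'(x) = \<Sum> D_n x^n with D_n = (n+1) A_n; for cd \<le> 1 the D_n are nonincreasing with D_0 = 1.
   2. For any power series with nonnegative nonincreasing coefficients, (1-x) times its sum is
      nonincreasing on [0,1).  Hence Q(x) = (1-x) G'(x) is nonincreasing and G' \<ge> 1.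
   3. Abstractly (locale below): if G(0) = 0, G' \<ge> 0 and Q is nonincreasing, then comparing
      derivatives gives G(x) \<ge> Q(x) (-ln(1-x)); since sigma(u) u \<le> -ln(1-sigma u), this yields
      d/du [G(sigma u)/u] \<le> 0.
   The main theorem combines monotonicity of G(sigma u) with the antitonicity of G(sigma u)/u. *)

definition logistic :: "real \<Rightarrow> real" where
  "logistic u = exp u / (1 + exp u)"

lemma one_plus_exp_pos: "0 < 1 + exp (u::real)"
  by (simp add: add_pos_pos)

lemma logistic_bounds: "0 < logistic u" "logistic u < 1"
  using one_plus_exp_pos[of u] by (auto simp: logistic_def divide_simps)

lemma logistic_mono: "u \<le> v \<Longrightarrow> logistic u \<le> logistic v"
  using one_plus_exp_pos[of u] one_plus_exp_pos[of v] exp_le_cancel_iff[of u v]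
  by (auto simp: logistic_def divide_simps algebra_simps)

lemma logistic_deriv: "(logistic has_real_derivative logistic u * (1 - logistic u)) (at u)"
proof -
  have "(logistic has_real_derivative (exp u * (1 + exp u) - exp u * exp u) / (1 + exp u)^2) (at u)"
    unfolding logistic_def[abs_def] using one_plus_exp_pos[of u]
    by (auto intro!: derivative_eq_intros simp: power2_eq_square)
  moreover have "(exp u * (1 + exp u) - exp u * exp u) / (1 + exp u)^2 = logistic u * (1 - logistic u)"
    unfolding logistic_def using one_plus_exp_pos[of u] by (simp add: field_simps power2_eq_square)
  ultimately show ?thesis by simp
qed

text \<open>With x = sigma(u) we have ln x = u + ln(1-x); as x ln x and (1-x) ln(1-x) are
  nonpositive, this gives x u \<le> -ln(1-x).\<close>
lemma logistic_times_le_neg_ln: "logistic u * u \<le> - ln (1 - logistic u)"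
proof -
  define x where "x = logistic u"
  have x: "0 < x" "x < 1" using logistic_bounds unfolding x_def by auto
  have "x = exp u * (1 - x)"
    unfolding x_def logistic_def using one_plus_exp_pos[of u] by (simp add: field_simps)
  then have "ln x = ln (exp u) + ln (1 - x)"
    using x by (metis diff_gt_0_iff_gt exp_gt_zero ln_mult_pos)
  then have ln_x: "ln x = u + ln (1 - x)" by simp
  have "x * ln x \<le> 0" "(1 - x) * ln (1 - x) \<le> 0"
    using x by (simp_all add: mult_nonneg_nonpos)
  then show ?thesis unfolding x_def[symmetric] using ln_x by (simp add: algebra_simps)
qed

lemma powr_fraction_eq_logistic: "0 < s \<Longrightarrow> s powr e / (1 + s powr e) = logistic (e * ln s)"
  by (simp add: logistic_def powr_def)

section \<open>Power series with nonincreasing coefficients\<close>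

lemma summable_bounded_coeffs:
  fixes f :: "nat \<Rightarrow> real"
  assumes "\<And>n. \<bar>f n\<bar> \<le> M" and "\<bar>x\<bar> < 1"
  shows "summable (\<lambda>n. f n * x ^ n)"
proof (rule summable_comparison_test[where g = "\<lambda>n. M * \<bar>x\<bar> ^ n"])
  show "\<exists>N. \<forall>n\<ge>N. norm (f n * x ^ n) \<le> M * \<bar>x\<bar> ^ n"
    using assms(1) by (auto simp: abs_mult power_abs intro!: mult_right_mono)
  show "summable (\<lambda>n. M * \<bar>x\<bar> ^ n)"
    using assms(2) by (simp add: summable_geometric)
qed

lemma one_minus_x_times_series:
  fixes D :: "nat \<Rightarrow> real"
  assumes sD: "summable (\<lambda>n. D n * x ^ n)"
  shows "summable (\<lambda>n. (D n - D (Suc n)) * x ^ Suc n)"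
    and "(1 - x) * (\<Sum>n. D n * x ^ n) = D 0 - (\<Sum>n. (D n - D (Suc n)) * x ^ Suc n)"
proof -
  have s1: "summable (\<lambda>n. D (Suc n) * x ^ Suc n)"
    using sD by (subst summable_Suc_iff)
  have s2: "summable (\<lambda>n. x * (D n * x ^ n))"
    using sD by (rule summable_mult)
  have eq: "(\<lambda>n. (D n - D (Suc n)) * x ^ Suc n) = (\<lambda>n. x * (D n * x ^ n) - D (Suc n) * x ^ Suc n)"
    by (simp add: fun_eq_iff algebra_simps)
  show "summable (\<lambda>n. (D n - D (Suc n)) * x ^ Suc n)"
    unfolding eq by (rule summable_diff[OF s2 s1])
  have "(\<Sum>n. (D n - D (Suc n)) * x ^ Suc n) = x * (\<Sum>n. D n * x ^ n) - ((\<Sum>n. D n * x ^ n) - D 0)"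
    unfolding eq using suminf_diff[OF s2 s1] suminf_mult[OF sD] suminf_split_head[OF sD] by simp
  then show "(1 - x) * (\<Sum>n. D n * x ^ n) = D 0 - (\<Sum>n. (D n - D (Suc n)) * x ^ Suc n)"
    by (simp add: algebra_simps)
qed

text \<open>If the coefficients are nonnegative and nonincreasing, (1-x) \<Sum> D_n x^n is
  nonincreasing on [0,1): the subtracted series has nonnegative coefficients.\<close>
lemma damped_series_antimono:
  fixes D :: "nat \<Rightarrow> real"
  assumes dec: "\<And>n. D (Suc n) \<le> D n" and nonneg: "\<And>n. 0 \<le> D n"
    and "0 \<le> y" "y \<le> x" "x < 1"
  shows "(1 - x) * (\<Sum>n. D n * x ^ n) \<le> (1 - y) * (\<Sum>n. D n * y ^ n)"
proof -
  have "D n \<le> D 0" for n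
  proof (induction n)
    case (Suc n)
    then show ?case using dec[of n] by linarith
  qed simp
  then have bound: "\<bar>D n\<bar> \<le> D 0" for n
    using nonneg[of n] by simp
  have sx: "summable (\<lambda>n. D n * x ^ n)" and sy: "summable (\<lambda>n. D n * y ^ n)"
    using assms by (auto intro!: summable_bounded_coeffs[OF bound])
  have "(\<Sum>n. (D n - D (Suc n)) * y ^ Suc n) \<le> (\<Sum>n. (D n - D (Suc n)) * x ^ Suc n)"
    using one_minus_x_times_series(1)[OF sx] one_minus_x_times_series(1)[OF sy] assms
    by (intro suminf_le) (auto intro!: mult_left_mono power_mono simp del: power_Suc)
  then show ?thesis
    using one_minus_x_times_series(2)[OF sx] one_minus_x_times_series(2)[OF sy] by simp
qed

lemma series_ge_head:
  fixes D :: "nat \<Rightarrow> real"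
  assumes "summable (\<lambda>n. D n * x ^ n)" "\<And>n. 0 \<le> D n" "0 \<le> x"
  shows "D 0 \<le> (\<Sum>n. D n * x ^ n)"
  using sum_le_suminf[OF assms(1), of "{..<1}"] assms(2,3) by simp

section \<open>Functions with nonincreasing damped slope (1-x) G'(x)\<close>

locale damped_slope_antimono =
  fixes G G' :: "real \<Rightarrow> real"
  assumes G_0: "G 0 = 0"
    and G_deriv: "\<And>x. 0 \<le> x \<Longrightarrow> x < 1 \<Longrightarrow> (G has_real_derivative G' x) (at x)"
    and G'_nonneg: "\<And>x. 0 \<le> x \<Longrightarrow> x < 1 \<Longrightarrow> 0 \<le> G' x"
    and slope_antimono: "\<And>x y. 0 \<le> y \<Longrightarrow> y \<le> x \<Longrightarrow> x < 1 \<Longrightarrow> (1 - x) * G' x \<le> (1 - y) * G' y"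
begin

lemma G_mono:
  assumes "0 \<le> y" "y \<le> x" "x < 1"
  shows "G y \<le> G x"
proof (rule DERIV_nonneg_imp_nondecreasing[OF assms(2)])
  fix z assume "y \<le> z" "z \<le> x"
  then show "\<exists>w. (G has_real_derivative w) (at z) \<and> 0 \<le> w"
    using G_deriv[of z] G'_nonneg[of z] assms by auto
qed

text \<open>Comparison with Q(x) (-ln(1-y)), Q(x) = (1-x) G'(x): for y \<le> x its derivative
  Q(x)/(1-y) is at most G'(y), and both functions vanish at 0.\<close>
lemma G_ge_slope_times_log:
  assumes "0 \<le> x" "x < 1"
  shows "(1 - x) * G' x * (- ln (1 - x)) \<le> G x"
proof -
  define Q where "Q = (1 - x) * G' x"
  define k where "k y = G y + Q * ln (1 - y)" for y
  have "k 0 \<le> k x"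
  proof (rule DERIV_nonneg_imp_nondecreasing[OF assms(1)])
    fix y assume y: "0 \<le> y" "y \<le> x"
    have "(k has_real_derivative (G' y - Q / (1 - y))) (at y)"
      unfolding k_def[abs_def] using y assms
      by (auto intro!: derivative_eq_intros G_deriv simp: field_simps)
    moreover have "Q / (1 - y) \<le> G' y"
      using slope_antimono[of y x] y assms by (simp add: Q_def pos_divide_le_eq mult.commute)
    ultimately show "\<exists>z. (k has_real_derivative z) (at y) \<and> 0 \<le> z" by auto
  qed
  then show ?thesis by (simp add: k_def G_0 Q_def)
qed

text \<open>The numerator of d/du [G(sigma u)/u] is nonpositive.\<close>
lemma logistic_slope_le: "G' (logistic u) * (logistic u * (1 - logistic u)) * u \<le> G (logistic u)"
proof -
  define x where "x = logistic u"
  have x: "0 < x" "x < 1" using logistic_bounds unfolding x_def by auto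
  have Q: "0 \<le> (1 - x) * G' x" using G'_nonneg[of x] x by simp
  have "G' x * (x * (1 - x)) * u = ((1 - x) * G' x) * (x * u)" by (simp add: algebra_simps)
  also have "\<dots> \<le> ((1 - x) * G' x) * (- ln (1 - x))"
    using mult_left_mono[OF logistic_times_le_neg_ln Q] by (simp add: x_def)
  also have "\<dots> \<le> G x" using G_ge_slope_times_log x by simp
  finally show ?thesis unfolding x_def .
qed

lemma logistic_quotient_antimono:
  assumes "0 < p" "p \<le> q"
  shows "G (logistic q) / q \<le> G (logistic p) / p"
proof (rule DERIV_nonpos_imp_nonincreasing[OF assms(2)])
  fix u assume "p \<le> u" "u \<le> q"
  then have u: "0 < u" using assms by simp
  have "(G has_real_derivative G' (logistic u)) (at (logistic u))"
    using G_deriv logistic_bounds[of u] by simp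
  from DERIV_chain2[OF this logistic_deriv]
  have "((\<lambda>v. G (logistic v) / v) has_real_derivative
      (G' (logistic u) * (logistic u * (1 - logistic u)) * u - G (logistic u) * 1) / (u * u)) (at u)"
    using u by (intro derivative_eq_intros) auto
  moreover have "(G' (logistic u) * (logistic u * (1 - logistic u)) * u - G (logistic u) * 1) / (u * u) \<le> 0"
    using logistic_slope_le[of u] by (intro divide_nonpos_nonneg) auto
  ultimately show "\<exists>y. ((\<lambda>v. G (logistic v) / v) has_real_derivative y) (at u) \<and> y \<le> 0"
    by blast
qed

end

lemma sum_ge_twice_prod:
  fixes c d :: real
  assumes "0 < c" "0 < d" "c * d \<le> 1"
  shows "2 * c * d \<le> c + d"
proof -
  have "(2 * c * d)^2 \<le> 4 * (c * d)"
    using assms mult_left_le[of "c * d" "c * d"] by (simp add: power2_eq_square algebra_simps)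
  also have "\<dots> \<le> (c + d)^2"
    using zero_le_square[of "c - d"] by (simp add: power2_eq_square algebra_simps)
  finally show ?thesis
    using assms by (simp add: power2_le_iff_abs_le)
qed

definition hyp_coeff :: "real \<Rightarrow> real \<Rightarrow> nat \<Rightarrow> real" where
  "hyp_coeff c d n = pochhammer c n * pochhammer d n / pochhammer (c + d) n / fact n"

definition shifted_coeff :: "real \<Rightarrow> real \<Rightarrow> nat \<Rightarrow> real" where
  "shifted_coeff c d n = (case n of 0 \<Rightarrow> 0 | Suc m \<Rightarrow> hyp_coeff c d m)"

definition deriv_coeff :: "real \<Rightarrow> real \<Rightarrow> nat \<Rightarrow> real" where
  "deriv_coeff c d n = real (Suc n) * hyp_coeff c d n"

definition xF :: "real \<Rightarrow> real \<Rightarrow> real \<Rightarrow> real" where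
  "xF c d x = (\<Sum>n. shifted_coeff c d n * x ^ n)"

definition xF' :: "real \<Rightarrow> real \<Rightarrow> real \<Rightarrow> real" where
  "xF' c d x = (\<Sum>n. deriv_coeff c d n * x ^ n)"

context
  fixes c d :: real
  assumes c_pos: "0 < c" and d_pos: "0 < d" and cd_le_1: "c * d \<le> 1"
begin

lemma hyp_coeff_pos: "0 < hyp_coeff c d n"
  unfolding hyp_coeff_def using c_pos d_pos
  by (auto intro!: divide_pos_pos mult_pos_pos pochhammer_pos)

lemma hyp_coeff_Suc:
  "hyp_coeff c d (Suc n) = hyp_coeff c d n * ((c + n) * (d + n) / ((c + d + n) * (n + 1)))"
proof -
  have "0 < pochhammer (c + d) n" "0 < c + d + n"
    using c_pos d_pos by (auto intro: pochhammer_pos)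
  then show ?thesis
    unfolding hyp_coeff_def pochhammer_rec' fact_Suc by (simp add: field_simps)
qed

text \<open>The key use of cd \<le> 1: (n+2)(c+n)(d+n) \<le> (n+1)^2 (c+d+n), since the difference
  is c + d - 2cd + n(1 - cd).\<close>
lemma deriv_coeff_Suc_le: "deriv_coeff c d (Suc n) \<le> deriv_coeff c d n"
proof -
  have key: "(n + 2) * ((c + n) * (d + n)) \<le> (n + 1)^2 * (c + d + n)"
  proof -
    have "(n + 1)^2 * (c + d + n) - (n + 2) * ((c + n) * (d + n)) = (c + d - 2 * c * d) + n * (1 - c * d)"
      by (simp add: power2_eq_square algebra_simps)
    moreover have "0 \<le> real n * (1 - c * d)" using cd_le_1 by simp
    ultimately show ?thesis
      using sum_ge_twice_prod[OF c_pos d_pos cd_le_1] by simp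
  qed
  have pos: "0 < (c + d + n) * (n + 1)" using c_pos d_pos by simp
  have "deriv_coeff c d (Suc n)
      = hyp_coeff c d n * ((n + 2) * ((c + n) * (d + n)) / ((c + d + n) * (n + 1)))"
    unfolding deriv_coeff_def hyp_coeff_Suc by (simp add: field_simps)
  also have "\<dots> \<le> hyp_coeff c d n * ((n + 1)^2 * (c + d + n) / ((c + d + n) * (n + 1)))"
    using key pos hyp_coeff_pos[of n] by (intro mult_left_mono divide_right_mono) auto
  also have "\<dots> = deriv_coeff c d n"
    unfolding deriv_coeff_def using pos by (simp add: field_simps power2_eq_square)
  finally show ?thesis .
qed

lemma deriv_coeff_0: "deriv_coeff c d 0 = 1"
  by (simp add: deriv_coeff_def hyp_coeff_def)

lemma deriv_coeff_nonneg: "0 \<le> deriv_coeff c d n"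
  using hyp_coeff_pos[of n] by (simp add: deriv_coeff_def)

lemma deriv_coeff_le_1: "deriv_coeff c d n \<le> 1"
proof (induction n)
  case (Suc n)
  then show ?case using deriv_coeff_Suc_le[of n] by linarith
qed (simp add: deriv_coeff_0)

lemma hyp_coeff_le_1: "hyp_coeff c d n \<le> 1"
proof -
  have "hyp_coeff c d n \<le> deriv_coeff c d n"
    using hyp_coeff_pos[of n] by (simp add: deriv_coeff_def)
  then show ?thesis using deriv_coeff_le_1[of n] by linarith
qed

lemma shifted_coeff_bound: "\<bar>shifted_coeff c d n\<bar> \<le> 1"
  using hyp_coeff_pos hyp_coeff_le_1 by (simp add: shifted_coeff_def less_imp_le split: nat.split)

lemma xF_eq: assumes "\<bar>x\<bar> < 1" shows "xF c d x = x * hyp2F1 c d (c + d) x"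
proof -
  have "\<bar>hyp_coeff c d n\<bar> \<le> 1" for n
    using hyp_coeff_pos[of n] hyp_coeff_le_1[of n] by simp
  then have "summable (\<lambda>n. hyp_coeff c d n * x ^ n)"
    using summable_bounded_coeffs assms by blast
  then have "(\<lambda>n. shifted_coeff c d (Suc n) * x ^ Suc n) sums (x * (\<Sum>n. hyp_coeff c d n * x ^ n))"
    using sums_mult[OF summable_sums] by (simp add: shifted_coeff_def mult_ac)
  from sums_Suc[OF this] have "(\<lambda>n. shifted_coeff c d n * x ^ n) sums (x * (\<Sum>n. hyp_coeff c d n * x ^ n))"
    by (simp add: shifted_coeff_def)
  then show ?thesis
    unfolding xF_def hyp2F1_def hyp_coeff_def by (simp add: sums_iff divide_inverse mult_ac)
qed

lemma xF_deriv: assumes "\<bar>x\<bar> < 1" shows "(xF c d has_real_derivative xF' c d x) (at x)"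
proof -
  have "diffs (shifted_coeff c d) = deriv_coeff c d"
    by (auto simp: diffs_def shifted_coeff_def deriv_coeff_def fun_eq_iff)
  moreover have "((\<lambda>z. \<Sum>n. shifted_coeff c d n * z ^ n) has_field_derivative
      (\<Sum>n. diffs (shifted_coeff c d) n * x ^ n)) (at x)"
    by (rule termdiffs_strong'[where K = 1])
       (use assms shifted_coeff_bound summable_bounded_coeffs in auto)
  ultimately show ?thesis unfolding xF_def[abs_def] xF'_def by simp
qed

lemma xF'_ge_1: assumes "0 \<le> x" "x < 1" shows "1 \<le> xF' c d x"
  using series_ge_head[of "deriv_coeff c d" x] summable_bounded_coeffs[of "deriv_coeff c d" 1 x]
    deriv_coeff_nonneg deriv_coeff_le_1 deriv_coeff_0 assms
  unfolding xF'_def by simp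

lemma xF_damped_slope: "damped_slope_antimono (xF c d) (xF' c d)"
proof
  show "xF c d 0 = 0" by (simp add: xF_def shifted_coeff_def split: nat.split)
  show "(xF c d has_real_derivative xF' c d x) (at x)" if "0 \<le> x" "x < 1" for x
    using xF_deriv that by simp
  show "0 \<le> xF' c d x" if "0 \<le> x" "x < 1" for x
    using xF'_ge_1[OF that] by simp
  show "(1 - x) * xF' c d x \<le> (1 - y) * xF' c d y" if "0 \<le> y" "y \<le> x" "x < 1" for x y
    unfolding xF'_def using damped_series_antimono deriv_coeff_Suc_le deriv_coeff_nonneg that
    by blast
qed

interpretation xF: damped_slope_antimono "xF c d" "xF' c d"
  by (rule xF_damped_slope)

lemma xF_ge_id: assumes "0 \<le> x" "x < 1" shows "x \<le> xF c d x"
proof -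
  have "xF c d 0 - 0 \<le> xF c d x - x"
  proof (rule DERIV_nonneg_imp_nondecreasing[of 0 x "\<lambda>y. xF c d y - y", OF assms(1)])
    fix y assume "0 \<le> y" "y \<le> x"
    then show "\<exists>z. ((\<lambda>y. xF c d y - y) has_real_derivative z) (at y) \<and> 0 \<le> z"
      using assms xF_deriv[of y] xF'_ge_1[of y]
      by (intro exI[of _ "xF' c d y - 1"]) (auto intro!: derivative_eq_intros)
  qed
  then show ?thesis using xF.G_0 by simp
qed

lemma xF_logistic_ratio_bounds:
  assumes a: "0 < a" and ab: "a \<le> b" and t: "0 \<le> t"
  defines "r \<equiv> xF c d (logistic (b * t)) / xF c d (logistic (a * t))"
  shows "1 \<le> r \<and> r \<le> b / a"
proof -
  define p q where "p = xF c d (logistic (b * t))" and "q = xF c d (logistic (a * t))"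
  have q_pos: "0 < q"
    unfolding q_def using xF_ge_id[of "logistic (a * t)"] logistic_bounds[of "a * t"] by linarith
  have "a * t \<le> b * t" using ab t by (simp add: mult_right_mono)
  then have "q \<le> p"
    unfolding p_def q_def
    using xF.G_mono[OF _ logistic_mono logistic_bounds(2)] logistic_bounds(1)[of "a * t"]
    by (simp add: less_imp_le)
  moreover have "p * a \<le> q * b"
  proof (cases "t = 0")
    case True
    then show ?thesis using \<open>q \<le> p\<close> ab q_pos by (simp add: p_def q_def mult_mono)
  next
    case False
    then have t_pos: "0 < t" using t by simp
    have "p / (b * t) * t \<le> q / (a * t) * t"
      unfolding p_def q_def using xF.logistic_quotient_antimono[OF _ \<open>a * t \<le> b * t\<close>] a t_pos
      by (intro mult_right_mono) simp_all
    then have "p / b \<le> q / a" using t_pos by simp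
    then show ?thesis using a ab by (simp add: field_simps)
  qed
  ultimately show ?thesis
    using q_pos a by (simp add: r_def p_def[symmetric] q_def[symmetric] field_simps)
qed

end

theorem mainTheorem9:
  fixes c d a b s :: real and g :: "real \<Rightarrow> real"
  assumes "c > 0" and "d > 0" and "c * d \<le> 1"
    and "\<And>x. 0 < x \<Longrightarrow> x < 1 \<Longrightarrow> g x = x * hyp2F1 c d (c + d) x"
    and "a > 0" and "b \<ge> a" and "s \<ge> 1"
  shows "1 \<le> g (s powr b / (1 + s powr b)) / g (s powr a / (1 + s powr a))
    \<and> g (s powr b / (1 + s powr b)) / g (s powr a / (1 + s powr a)) \<le> b / a"
proof -
  have logistic_form: "s powr e / (1 + s powr e) = logistic (e * ln s)" for e
    using assms(7) by (simp add: powr_fraction_eq_logistic)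
  have g_eq_xF: "g (logistic u) = xF c d (logistic u)" for u
    using assms(4)[OF logistic_bounds] xF_eq[OF assms(1-3)] logistic_bounds[of u] by simp
  have "0 \<le> ln s" using assms(7) by simp
  then show ?thesis
    unfolding logistic_form g_eq_xF by (rule xF_logistic_ratio_bounds[OF assms(1-3,5,6)])
qed

end
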